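(* For every commutative $n$-cube $D:\{0\to1\}^n\to\Delta_+$, the assignment $v\mapsto H_{comb}(c_v)$ together with the maps $H_{comb}(c_w)\to H_{comb}(c_v)$ described below forms a commutative diagram, i.e. a functor $H_{comb}(D):N(P_n)\to\mathrm{sSet}^{op}$ (an $n$-cube of correspondences in $\mathrm{sSet}^{op}$).
   Context: $\Delta_+$ is the category of finite linear orders and monotone maps. For $X\in\Delta_+$, $\langle X\rangle$ is the simplicial set represented by the ordered set $\mathrm{Hom}(X,\{0<1\})$ (pointwise order). For an interval $X$ of a linear order $Y$, $i_!:\langle X\rangle\to\langle Y\rangle$ extends $\varphi$ by $0$ below $X$ and $1$ above $X$. For monotone $\alpha:X\to Y$, $H_{comb}(\alpha)\subseteq\langle X\rangle$ is the simplicial subset given by the union of the images of $i_!:\langle\alpha^{-1}(y)\rangle\to\langle X\rangle$, $y\in Y$. For $X\xrightarrow{f}Y\xrightarrow{g}Z$ with $\alpha=gf$: the map $H_{comb}(f)\to H_{comb}(\alpha)$ is the inclusion inside $\langle X\rangle$ (each fiber of $f$ is a subinterval of a fiber of $\alpha$), and $H_{comb}(g)\to H_{comb}(\alpha)$ is, on each $\langle g^{-1}(z)\rangle$, the map $\langle g^{-1}(z)\rangle\to\langle\alpha^{-1}(z)\rangle$ induced by $f|:\alpha^{-1}(z)\to g^{-1}(z)$. $P_n$ is the poset of faces $v\in\{-,0,+\}^n$ of the $n$-cube, $v\to w$ iff $w$ is a subface of $v$ (i.e. $v_i=\pm\Rightarrow w_i=v_i$); face $v$ consists of vertices $\varepsilon$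 with $\varepsilon_i=0$ where $v_i=-$ and $\varepsilon_i=1$ where $v_i=+$. $c_v$ is the composite map in $D$ from the initial vertex of face $v$ to its terminal vertex. For $w$ a subface of $v$, write $c_v=h\circ c_w\circ f$ with $f$ from the initial vertex of $v$ to that of $w$ and $h$ from the terminal vertex of $w$ to that of $v$; the map $H_{comb}(c_w)\to H_{comb}(c_v)$ is the composite $H_{comb}(c_w)\to H_{comb}(h c_w)\to H_{comb}(hc_wf)$ of the two kinds of maps above. *)

theory Defs
  imports Main
begin

(* Delta_+ is modelled by its skeleton: the object m is the linear order {0..<m}
   (m = 0 is the empty order); a morphism m -> m' is a function nat => nat that is
   monotone on {..<m} and maps {..<m} into {..<m'}; maps are compared on {..<m}. *)
definition is_mor :: "nat \<Rightarrow> nat \<Rightarrow> (nat \<Rightarrow> nat) \<Rightarrow> bool" where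
  "is_mor m m' f \<longleftrightarrow> (\<forall>x<m. f x < m') \<and> mono_on {..<m} f"

(* Hom(X,{0<1}) for a finite ordered set X \<subseteq> nat; elements are canonical (False off X),
   ordered pointwise (False < True). *)
definition homs2 :: "nat set \<Rightarrow> (nat \<Rightarrow> bool) set" where
  "homs2 X = {\<phi>. mono_on X \<phi> \<and> (\<forall>i. i \<notin> X \<longrightarrow> \<phi> i = False)}"

definition nerve :: "'a::order set \<Rightarrow> nat \<Rightarrow> 'a list set" where
  "nerve P k = {xs. length xs = Suc k \<and> set xs \<subseteq> P \<and> sorted_wrt (\<le>) xs}"

definition dface :: "nat \<Rightarrow> 'a list \<Rightarrow> 'a list" where
  "dface i xs = take i xs @ drop (Suc i) xs"
definition degen :: "nat \<Rightarrow> 'a list \<Rightarrow> 'a list" where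
  "degen i xs = take (Suc i) xs @ drop i xs"

definition fib :: "(nat \<Rightarrow> nat) \<Rightarrow> nat \<Rightarrow> nat \<Rightarrow> nat set" where
  "fib \<alpha> m y = {x. x < m \<and> \<alpha> x = y}"

(* i_! : <alpha^{-1}(y)> -> <{..<m}>, extension by 0 below and 1 above the fibre
   (for an empty fibre its position is the one determined by y) *)
definition fib_ext :: "(nat \<Rightarrow> nat) \<Rightarrow> nat \<Rightarrow> nat \<Rightarrow> (nat \<Rightarrow> bool) \<Rightarrow> (nat \<Rightarrow> bool)" where
  "fib_ext \<alpha> m y \<phi> = (\<lambda>x. x < m \<and> (y < \<alpha> x \<or> (\<alpha> x = y \<and> \<phi> x)))"

definition Hcomb :: "(nat \<Rightarrow> nat) \<Rightarrow> nat \<Rightarrow> nat \<Rightarrow> nat \<Rightarrow> (nat \<Rightarrow> bool) list set" where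
  "Hcomb \<alpha> m m' k = (\<Union>y\<in>{..<m'}. map (fib_ext \<alpha> m y) ` nerve (homs2 (fib \<alpha> m y)) k)"

definition pull_fib :: "(nat \<Rightarrow> nat) \<Rightarrow> nat set \<Rightarrow> (nat \<Rightarrow> bool) \<Rightarrow> (nat \<Rightarrow> bool)" where
  "pull_fib f X \<psi> = (\<lambda>x. x \<in> X \<and> \<psi> (f x))"

(* For X -f-> Y -g-> Z (sizes mX, mY, mZ), alpha = g o f: the map H_comb(g) -> H_comb(alpha),
   defined on each piece <g^{-1}(z)> as the map induced by f| : alpha^{-1}(z) -> g^{-1}(z). *)
definition Hmap :: "(nat \<Rightarrow> nat) \<Rightarrow> nat \<Rightarrow> nat \<Rightarrow> (nat \<Rightarrow> nat) \<Rightarrow> nat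
    \<Rightarrow> (nat \<Rightarrow> bool) list \<Rightarrow> (nat \<Rightarrow> bool) list" where
  "Hmap g mY mZ f mX \<sigma> = (SOME r. \<exists>z \<tau>. z < mZ \<and> \<tau> \<in> nerve (homs2 (fib g mY z)) (length \<sigma> - 1)
      \<and> \<sigma> = map (fib_ext g mY z) \<tau>
      \<and> r = map (fib_ext (g \<circ> f) mX z) (map (pull_fib f (fib (g \<circ> f) mX z)) \<tau>))"

(* Commutative n-cube D : {0->1}^n -> Delta_+, i.e. a functor from the poset of subsets
   of {..<n} (vertex eps <-> set of coordinates equal to 1). *)
definition is_cube :: "nat \<Rightarrow> (nat set \<Rightarrow> nat) \<Rightarrow> (nat set \<Rightarrow> nat set \<Rightarrow> nat \<Rightarrow> nat) \<Rightarrow> bool" where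
  "is_cube n obj D \<longleftrightarrow>
     (\<forall>S T. S \<subseteq> T \<and> T \<subseteq> {..<n} \<longrightarrow> is_mor (obj S) (obj T) (D S T)) \<and>
     (\<forall>S. S \<subseteq> {..<n} \<longrightarrow> (\<forall>x<obj S. D S S x = x)) \<and>
     (\<forall>S T U. S \<subseteq> T \<and> T \<subseteq> U \<and> U \<subseteq> {..<n} \<longrightarrow> (\<forall>x<obj S. D T U (D S T x) = D S U x))"

(* faces of the n-cube: v \<in> {-,0,+}^n (canonically Zero outside {..<n}) *)
datatype sgn = Minus | Zero | Plus

definition faces :: "nat \<Rightarrow> (nat \<Rightarrow> sgn) set" where
  "faces n = {v. \<forall>i. n \<le> i \<longrightarrow> v i = Zero}"

(* v -> w in P_n iff w is a subface of v *)
definition subface :: "(nat \<Rightarrow> sgn) \<Rightarrow> (nat \<Rightarrow> sgn) \<Rightarrow> bool" where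
  "subface v w \<longleftrightarrow> (\<forall>i. v i \<noteq> Zero \<longrightarrow> w i = v i)"

definition init_v :: "(nat \<Rightarrow> sgn) \<Rightarrow> nat set" where
  "init_v v = {i. v i = Plus}"
definition term_v :: "nat \<Rightarrow> (nat \<Rightarrow> sgn) \<Rightarrow> nat set" where
  "term_v n v = {i. i < n \<and> v i \<noteq> Minus}"

definition cv :: "nat \<Rightarrow> (nat set \<Rightarrow> nat set \<Rightarrow> nat \<Rightarrow> nat) \<Rightarrow> (nat \<Rightarrow> sgn) \<Rightarrow> nat \<Rightarrow> nat" where
  "cv n D v = D (init_v v) (term_v n v)"

definition Hc :: "nat \<Rightarrow> (nat set \<Rightarrow> nat) \<Rightarrow> (nat set \<Rightarrow> nat set \<Rightarrow> nat \<Rightarrow> nat) \<Rightarrow> (nat \<Rightarrow> sgn)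
    \<Rightarrow> nat \<Rightarrow> (nat \<Rightarrow> bool) list set" where
  "Hc n obj D v k = Hcomb (cv n D v) (obj (init_v v)) (obj (term_v n v)) k"

(* For w a subface of v: c_v = h o c_w o f; the map H_comb(c_w) -> H_comb(c_v) is the composite
   of the inclusion H_comb(c_w) \<subseteq> H_comb(h o c_w) (identity on simplices) and
   H_comb(h o c_w) -> H_comb(h o c_w o f). *)
definition Htrans :: "nat \<Rightarrow> (nat set \<Rightarrow> nat) \<Rightarrow> (nat set \<Rightarrow> nat set \<Rightarrow> nat \<Rightarrow> nat)
    \<Rightarrow> (nat \<Rightarrow> sgn) \<Rightarrow> (nat \<Rightarrow> sgn) \<Rightarrow> (nat \<Rightarrow> bool) list \<Rightarrow> (nat \<Rightarrow> bool) list" where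
  "Htrans n obj D w v \<sigma> =
     Hmap (D (term_v n w) (term_v n v) \<circ> cv n D w) (obj (init_v w)) (obj (term_v n v))
          (D (init_v v) (init_v w)) (obj (init_v v)) \<sigma>"

end

theory Submission
  imports Defs
begin

text \<open>On a simplex of \<open>H_comb(c_w)\<close>, the map to \<open>H_comb(c_v)\<close> is just precomposition, vertex by vertex
  of the chain, with the edge \<open>f\<close> of the cube from the initial vertex of \<open>v\<close> to that of \<open>w\<close>. In this
  form functoriality comes from the functoriality of \<open>D\<close>, and compatibility with faces and
  degeneracies is automatic. The only real content is that for \<open>a = h \<circ> c \<circ> f\<close> precomposition with
  \<open>f\<close> carries the piece of \<open>H_comb(c)\<close> over \<open>y\<close> into the piece of \<open>H_comb(a)\<close> over \<open>h y\<close>: a map that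
  is \<open>0\<close> below and \<open>1\<close> above the fibre of \<open>c\<close> over \<open>y\<close> pulls back to one that is \<open>0\<close> below and \<open>1\<close>
  above the fibre of \<open>a\<close> over \<open>h y\<close>, because \<open>h\<close> is monotone.\<close>

definition precomp :: "(nat \<Rightarrow> nat) \<Rightarrow> nat \<Rightarrow> (nat \<Rightarrow> bool) \<Rightarrow> (nat \<Rightarrow> bool)" where
  "precomp f m \<phi> = (\<lambda>x. x < m \<and> \<phi> (f x))"

lemma precomp_cong: "(\<And>x. x < m \<Longrightarrow> f x = g x) \<Longrightarrow> precomp f m \<phi> = precomp g m \<phi>"
  by (auto simp: precomp_def fun_eq_iff)

lemma precomp_precomp:
  "(\<And>x. x < m \<Longrightarrow> f x < m') \<Longrightarrow> precomp f m (precomp g m' \<phi>) = precomp (g \<circ> f) m \<phi>"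
  by (auto simp: precomp_def fun_eq_iff)

lemma sorted_wrt_dface:
  assumes "sorted_wrt (\<le>) (xs :: 'a::order list)"
  shows "sorted_wrt (\<le>) (dface i xs)"
proof -
  have "sorted_wrt (\<le>) (take i xs @ drop i xs)" using assms by simp
  moreover have "set (drop (Suc i) xs) \<subseteq> set (drop i xs)"
    using set_drop_subset[of 1 "drop i xs"] by simp
  moreover have "sorted_wrt (\<le>) (drop (Suc i) xs)" using assms by (rule sorted_wrt_drop)
  ultimately show ?thesis unfolding dface_def sorted_wrt_append by blast
qed

lemma sorted_wrt_degen:
  assumes sorted: "sorted_wrt (\<le>) (xs :: 'a::order list)" and i: "i < length xs"
  shows "sorted_wrt (\<le>) (degen i xs)"
proof -
  have drop_i: "drop i xs = xs ! i # drop (Suc i) xs" using i by (rule Cons_nth_drop_Suc[symmetric])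
  have "degen i xs = take i xs @ xs ! i # xs ! i # drop (Suc i) xs"
    unfolding degen_def drop_i using i by (simp add: take_Suc_conv_app_nth)
  moreover have "sorted_wrt (\<le>) (take i xs @ xs ! i # drop (Suc i) xs)"
    using sorted by (simp only: drop_i[symmetric] append_take_drop_id)
  ultimately show ?thesis by (auto simp: sorted_wrt_append)
qed

lemma dface_map: "dface i (map f xs) = map f (dface i xs)"
  by (simp add: dface_def take_map drop_map)

lemma degen_map: "degen i (map f xs) = map f (degen i xs)"
  by (simp add: degen_def take_map drop_map)

lemma nerve_dface:
  assumes \<tau>: "\<tau> \<in> nerve P k" and "0 < k" "i \<le> k"
  shows "dface i \<tau> \<in> nerve P (k - 1)"
proof -
  have "length (dface i \<tau>) = Suc (k - 1)" using assms by (simp add: nerve_def dface_def)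
  moreover have "set (dface i \<tau>) \<subseteq> P"
    using \<tau> by (auto simp: nerve_def dface_def dest: in_set_takeD in_set_dropD)
  moreover have "sorted_wrt (\<le>) (dface i \<tau>)" using \<tau> by (simp add: nerve_def sorted_wrt_dface)
  ultimately show ?thesis unfolding nerve_def by simp
qed

lemma nerve_degen:
  assumes \<tau>: "\<tau> \<in> nerve P k" and "i \<le> k"
  shows "degen i \<tau> \<in> nerve P (Suc k)"
proof -
  have "length (degen i \<tau>) = Suc (Suc k)" using assms by (simp add: nerve_def degen_def)
  moreover have "set (degen i \<tau>) \<subseteq> P"
    using \<tau> by (auto simp: nerve_def degen_def dest: in_set_takeD in_set_dropD)
  moreover have "sorted_wrt (\<le>) (degen i \<tau>)" using assms by (simp add: nerve_def sorted_wrt_degen)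
  ultimately show ?thesis unfolding nerve_def by simp
qed

lemma nerve_map:
  assumes \<tau>: "\<tau> \<in> nerve P k" and F: "F ` P \<subseteq> Q" "mono F"
  shows "map F \<tau> \<in> nerve Q k"
proof -
  have "length \<tau> = Suc k" and "set \<tau> \<subseteq> P" and sorted: "sorted_wrt (\<le>) \<tau>"
    using \<tau> by (simp_all add: nerve_def)
  moreover have "sorted_wrt (\<lambda>x y. F x \<le> F y) \<tau>"
    by (rule sorted_wrt_mono_rel[OF _ sorted]) (blast dest: monoD[OF F(2)])
  ultimately show ?thesis using F(1) by (auto simp: nerve_def sorted_wrt_map)
qed

lemma HcombE:
  assumes "\<sigma> \<in> Hcomb c m m' k"
  obtains y \<tau> where "y < m'" "\<tau> \<in> nerve (homs2 (fib c m y)) k" "\<sigma> = map (fib_ext c m y) \<tau>"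
  using assms unfolding Hcomb_def by auto

lemma HcombI: "y < m' \<Longrightarrow> \<tau> \<in> nerve (homs2 (fib c m y)) k \<Longrightarrow> map (fib_ext c m y) \<tau> \<in> Hcomb c m m' k"
  unfolding Hcomb_def by blast

lemma Hcomb_dface:
  assumes "\<sigma> \<in> Hcomb c m m' k" "0 < k" "i \<le> k"
  shows "dface i \<sigma> \<in> Hcomb c m m' (k - 1)"
proof -
  obtain y \<tau> where y: "y < m'" and \<tau>: "\<tau> \<in> nerve (homs2 (fib c m y)) k"
    and \<sigma>: "\<sigma> = map (fib_ext c m y) \<tau>"
    using assms(1) by (rule HcombE)
  show ?thesis using HcombI[OF y nerve_dface[OF \<tau> assms(2,3)]] by (simp add: \<sigma> dface_map)
qed

lemma Hcomb_degen:
  assumes "\<sigma> \<in> Hcomb c m m' k" "i \<le> k"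
  shows "degen i \<sigma> \<in> Hcomb c m m' (Suc k)"
proof -
  obtain y \<tau> where y: "y < m'" and \<tau>: "\<tau> \<in> nerve (homs2 (fib c m y)) k"
    and \<sigma>: "\<sigma> = map (fib_ext c m y) \<tau>"
    using assms(1) by (rule HcombE)
  show ?thesis using HcombI[OF y nerve_degen[OF \<tau> assms(2)]] by (simp add: \<sigma> degen_map)
qed

lemma Hcomb_support: "\<sigma> \<in> Hcomb c m m' k \<Longrightarrow> \<phi> \<in> set \<sigma> \<Longrightarrow> \<phi> x \<Longrightarrow> x < m"
  unfolding Hcomb_def fib_ext_def by auto

lemma map_precomp_Hcomb_id:
  assumes "\<And>x. x < m \<Longrightarrow> f x = x" and "\<sigma> \<in> Hcomb c m m' k"
  shows "map (precomp f m) \<sigma> = \<sigma>"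
proof (rule map_idI)
  fix \<phi> assume "\<phi> \<in> set \<sigma>"
  then show "precomp f m \<phi> = \<phi>"
    using assms Hcomb_support by (auto simp: precomp_def fun_eq_iff)
qed

lemma Hmap_eq_map_precomp:
  assumes \<sigma>: "\<sigma> \<in> Hcomb g mY mZ k" and f: "\<And>x. x < mX \<Longrightarrow> f x < mY"
  shows "Hmap g mY mZ f mX \<sigma> = map (precomp f mX) \<sigma>"
proof -
  let ?P = "\<lambda>r. \<exists>z \<tau>. z < mZ \<and> \<tau> \<in> nerve (homs2 (fib g mY z)) (length \<sigma> - 1)
      \<and> \<sigma> = map (fib_ext g mY z) \<tau>
      \<and> r = map (fib_ext (g \<circ> f) mX z) (map (pull_fib f (fib (g \<circ> f) mX z)) \<tau>)"
  obtain z \<tau> where "z < mZ" "\<tau> \<in> nerve (homs2 (fib g mY z)) k" "\<sigma> = map (fib_ext g mY z) \<tau>"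
    using \<sigma> by (rule HcombE)
  moreover have "length \<sigma> - 1 = k" using calculation by (simp add: nerve_def)
  ultimately have "\<exists>r. ?P r" by blast
  \<comment> \<open>whichever piece \<open>SOME\<close> picks, the defining formula agrees there with precomposition\<close>
  then have "?P (Hmap g mY mZ f mX \<sigma>)" unfolding Hmap_def by (rule someI_ex)
  then obtain z \<tau> where \<tau>: "\<sigma> = map (fib_ext g mY z) \<tau>"
    and Hmap: "Hmap g mY mZ f mX \<sigma> =
      map (fib_ext (g \<circ> f) mX z) (map (pull_fib f (fib (g \<circ> f) mX z)) \<tau>)"
    by blast
  have "fib_ext (g \<circ> f) mX z (pull_fib f (fib (g \<circ> f) mX z) \<psi>) = precomp f mX (fib_ext g mY z \<psi>)"
    for \<psi> using f by (auto simp: fun_eq_iff fib_ext_def pull_fib_def fib_def precomp_def)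
  then show ?thesis using Hmap \<tau> by simp
qed

lemma is_morD:
  assumes "is_mor m m' f"
  shows is_mor_bound: "x < m \<Longrightarrow> f x < m'"
    and is_mor_mono: "x \<le> y \<Longrightarrow> y < m \<Longrightarrow> f x \<le> f y"
  using assms unfolding is_mor_def mono_on_def by auto

lemma mono_fib_ext: "mono (fib_ext c m y)"
  by (auto simp: mono_def fib_ext_def le_fun_def)

lemma mono_pull_fib: "mono (pull_fib f X)"
  by (auto simp: mono_def pull_fib_def le_fun_def)

lemma mono_on_fib_ext:
  assumes c: "is_mor m m' c" and \<psi>: "\<psi> \<in> homs2 (fib c m y)"
  shows "mono_on {..<m} (fib_ext c m y \<psi>)"
proof (rule mono_onI)
  fix p q assume "p \<in> {..<m}" "q \<in> {..<m}" and pq: "p \<le> q"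
  then have p: "p < m" and q: "q < m" by auto
  show "fib_ext c m y \<psi> p \<le> fib_ext c m y \<psi> q"
  proof (cases "c p = y \<and> c q = y")
    case True
    have "mono_on (fib c m y) \<psi>" using \<psi> by (simp add: homs2_def)
    moreover have "p \<in> fib c m y" "q \<in> fib c m y" using True p q by (simp_all add: fib_def)
    ultimately have "\<psi> p \<le> \<psi> q" using pq by (rule mono_onD)
    then show ?thesis using True q unfolding fib_ext_def le_bool_def by auto
  next
    case False
    moreover have "c p \<le> c q" using c pq q by (rule is_mor_mono)
    ultimately show ?thesis using q unfolding fib_ext_def le_bool_def by auto
  qed
qed

lemma pull_fib_in_homs2:
  assumes f: "is_mor m m' f" and X: "X \<subseteq> {..<m}" and \<phi>: "mono_on {..<m'} \<phi>"
  shows "pull_fib f X \<phi> \<in> homs2 X"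
proof -
  have "\<phi> (f p) \<le> \<phi> (f q)" if "p \<in> X" "q \<in> X" "p \<le> q" for p q
    using that X by (intro mono_onD[OF \<phi>]) (auto intro: is_mor_bound[OF f] is_mor_mono[OF f])
  then show ?thesis unfolding homs2_def mono_on_def pull_fib_def le_bool_def by auto
qed

lemma precomp_fib_ext:
  assumes h: "is_mor mT mS h" and f: "is_mor mV mW f" and c: "is_mor mW mT c"
    and y: "y < mT" and a: "\<And>x. x < mV \<Longrightarrow> a x = h (c (f x))"
  shows "precomp f mV (fib_ext c mW y \<psi>) = fib_ext a mV (h y) (pull_fib f (fib a mV (h y)) (fib_ext c mW y \<psi>))"
proof (rule ext)
  fix x
  show "precomp f mV (fib_ext c mW y \<psi>) x = fib_ext a mV (h y) (pull_fib f (fib a mV (h y)) (fib_ext c mW y \<psi>)) x"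
  proof (cases "x < mV")
    case True
    then have "c (f x) < mT" using f c by (simp add: is_mor_bound)
    then have "h y \<le> a x" if "y \<le> c (f x)"
      using that a[OF True] is_mor_mono[OF h] by auto
    moreover have "a x \<le> h y" if "c (f x) \<le> y"
      using that a[OF True] is_mor_mono[OF h] y by auto
    ultimately show ?thesis
      using True is_mor_bound[OF f True]
      by (auto simp: precomp_def fib_ext_def pull_fib_def fib_def)
  qed (simp add: precomp_def fib_ext_def)
qed

lemma map_precomp_Hcomb:
  assumes c: "is_mor mW mT c" and h: "is_mor mT mS h" and f: "is_mor mV mW f"
    and a: "\<And>x. x < mV \<Longrightarrow> a x = h (c (f x))" and \<sigma>: "\<sigma> \<in> Hcomb c mW mT k"
  shows "map (precomp f mV) \<sigma> \<in> Hcomb a mV mS k"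
proof -
  obtain y \<tau> where y: "y < mT" and \<tau>: "\<tau> \<in> nerve (homs2 (fib c mW y)) k"
    and \<sigma>_eq: "\<sigma> = map (fib_ext c mW y) \<tau>"
    using \<sigma> by (rule HcombE)
  let ?G = "pull_fib f (fib a mV (h y)) \<circ> fib_ext c mW y"
  have "?G ` homs2 (fib c mW y) \<subseteq> homs2 (fib a mV (h y))"
    using f c by (auto simp: fib_def intro!: pull_fib_in_homs2 mono_on_fib_ext)
  moreover have "mono ?G" by (rule monotone_on_o[OF mono_pull_fib mono_fib_ext]) simp
  ultimately have "map ?G \<tau> \<in> nerve (homs2 (fib a mV (h y))) k"
    using \<tau> by (intro nerve_map)
  moreover have "map (precomp f mV) \<sigma> = map (fib_ext a mV (h y)) (map ?G \<tau>)"
    using \<sigma>_eq precomp_fib_ext[OF h f c y a] by simp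
  moreover have "h y < mS" using h y by (rule is_mor_bound)
  ultimately show ?thesis unfolding Hcomb_def by blast
qed

lemma is_mor_id: "is_mor m m id"
  by (simp add: is_mor_def mono_on_def)

lemma subface_vertices:
  assumes w: "w \<in> faces n" and vw: "subface v w"
  shows "init_v v \<subseteq> init_v w" "init_v w \<subseteq> term_v n w" "term_v n w \<subseteq> term_v n v"
    "term_v n v \<subseteq> {..<n}"
proof -
  show "init_v v \<subseteq> init_v w" using vw unfolding subface_def init_v_def by auto
  show "init_v w \<subseteq> term_v n w"
  proof
    fix i assume "i \<in> init_v w"
    then have "w i = Plus" by (simp add: init_v_def)
    moreover have "i < n" using w \<open>w i = Plus\<close> by (cases "n \<le> i") (auto simp: faces_def)
    ultimately show "i \<in> term_v n w" by (simp add: term_v_def)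
  qed
  show "term_v n w \<subseteq> term_v n v"
  proof
    fix i assume "i \<in> term_v n w"
    moreover have "v i = Minus \<Longrightarrow> w i = Minus" using vw by (simp add: subface_def)
    ultimately show "i \<in> term_v n v" by (auto simp: term_v_def)
  qed
  show "term_v n v \<subseteq> {..<n}" unfolding term_v_def by auto
qed

lemma subface_refl: "subface v v"
  unfolding subface_def by simp

lemma subface_trans: "subface v w \<Longrightarrow> subface w u \<Longrightarrow> subface v u"
  unfolding subface_def by metis

lemma is_cube_mor: "is_cube n obj D \<Longrightarrow> S \<subseteq> T \<Longrightarrow> T \<subseteq> {..<n} \<Longrightarrow> is_mor (obj S) (obj T) (D S T)"
  unfolding is_cube_def by metis

lemma is_cube_id: "is_cube n obj D \<Longrightarrow> S \<subseteq> {..<n} \<Longrightarrow> x < obj S \<Longrightarrow> D S S x = x"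
  unfolding is_cube_def by metis

lemma is_cube_comp:
  "is_cube n obj D \<Longrightarrow> S \<subseteq> T \<Longrightarrow> T \<subseteq> U \<Longrightarrow> U \<subseteq> {..<n} \<Longrightarrow> x < obj S \<Longrightarrow> D T U (D S T x) = D S U x"
  unfolding is_cube_def by metis

context
  fixes n obj D
  assumes cube: "is_cube n obj D"
begin

lemma is_mor_cv: "w \<in> faces n \<Longrightarrow> is_mor (obj (init_v w)) (obj (term_v n w)) (cv n D w)"
  unfolding cv_def using subface_vertices[OF _ subface_refl] by (blast intro: is_cube_mor[OF cube])

lemma is_mor_init_v:
  "w \<in> faces n \<Longrightarrow> subface v w \<Longrightarrow> is_mor (obj (init_v v)) (obj (init_v w)) (D (init_v v) (init_v w))"
  using subface_vertices by (blast intro: is_cube_mor[OF cube])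

lemma is_mor_term_v:
  "w \<in> faces n \<Longrightarrow> subface v w \<Longrightarrow> is_mor (obj (term_v n w)) (obj (term_v n v)) (D (term_v n w) (term_v n v))"
  using subface_vertices by (blast intro: is_cube_mor[OF cube])

lemma cv_factor:
  assumes w: "w \<in> faces n" and vw: "subface v w" and x: "x < obj (init_v v)"
  shows "cv n D v x = D (term_v n w) (term_v n v) (cv n D w (D (init_v v) (init_v w) x))"
proof -
  note V = subface_vertices[OF w vw]
  have "cv n D w (D (init_v v) (init_v w) x) = D (init_v v) (term_v n w) x"
    unfolding cv_def using V x by (blast intro: is_cube_comp[OF cube])
  moreover have "D (term_v n w) (term_v n v) (D (init_v v) (term_v n w) x) = D (init_v v) (term_v n v) x"
    using V x by (blast intro: is_cube_comp[OF cube])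
  ultimately show ?thesis unfolding cv_def by simp
qed

lemma Hc_subset_Hcomb_postcomp:
  assumes w: "w \<in> faces n" and vw: "subface v w"
  shows "Hc n obj D w k \<subseteq> Hcomb (D (term_v n w) (term_v n v) \<circ> cv n D w) (obj (init_v w)) (obj (term_v n v)) k"
proof
  fix \<sigma> assume "\<sigma> \<in> Hc n obj D w k"
  then have \<sigma>: "\<sigma> \<in> Hcomb (cv n D w) (obj (init_v w)) (obj (term_v n w)) k" by (simp add: Hc_def)
  have "map (precomp id (obj (init_v w))) \<sigma>
      \<in> Hcomb (D (term_v n w) (term_v n v) \<circ> cv n D w) (obj (init_v w)) (obj (term_v n v)) k"
    using is_mor_cv[OF w] is_mor_term_v[OF w vw] is_mor_id _ \<sigma> by (rule map_precomp_Hcomb) simp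
  moreover have "map (precomp id (obj (init_v w))) \<sigma> = \<sigma>" using \<sigma> by (simp add: map_precomp_Hcomb_id)
  ultimately show "\<sigma> \<in> Hcomb (D (term_v n w) (term_v n v) \<circ> cv n D w) (obj (init_v w)) (obj (term_v n v)) k"
    by simp
qed

lemma Htrans_eq_map_precomp:
  assumes w: "w \<in> faces n" and vw: "subface v w" and \<sigma>: "\<sigma> \<in> Hc n obj D w k"
  shows "Htrans n obj D w v \<sigma> = map (precomp (D (init_v v) (init_v w)) (obj (init_v v))) \<sigma>"
  unfolding Htrans_def
  using Hc_subset_Hcomb_postcomp[OF w vw] \<sigma> is_mor_bound[OF is_mor_init_v[OF w vw]]
  by (intro Hmap_eq_map_precomp) auto

lemma Htrans_in_Hc:
  assumes w: "w \<in> faces n" and vw: "subface v w" and \<sigma>: "\<sigma> \<in> Hc n obj D w k"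
  shows "Htrans n obj D w v \<sigma> \<in> Hc n obj D v k"
  unfolding Htrans_eq_map_precomp[OF assms] Hc_def
  using is_mor_cv[OF w] is_mor_term_v[OF w vw] is_mor_init_v[OF w vw] cv_factor[OF w vw] \<sigma>[unfolded Hc_def]
  by (rule map_precomp_Hcomb)

lemma Htrans_dface:
  assumes w: "w \<in> faces n" and vw: "subface v w" and \<sigma>: "\<sigma> \<in> Hc n obj D w k" and "0 < k" "i \<le> k"
  shows "Htrans n obj D w v (dface i \<sigma>) = dface i (Htrans n obj D w v \<sigma>)"
proof -
  have dface: "dface i \<sigma> \<in> Hc n obj D w (k - 1)"
    using Hcomb_dface[OF \<sigma>[unfolded Hc_def] assms(4,5)] unfolding Hc_def .
  show ?thesis
    unfolding Htrans_eq_map_precomp[OF w vw \<sigma>] Htrans_eq_map_precomp[OF w vw dface] by (rule dface_map[symmetric])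
qed

lemma Htrans_degen:
  assumes w: "w \<in> faces n" and vw: "subface v w" and \<sigma>: "\<sigma> \<in> Hc n obj D w k" and "i \<le> k"
  shows "Htrans n obj D w v (degen i \<sigma>) = degen i (Htrans n obj D w v \<sigma>)"
proof -
  have degen: "degen i \<sigma> \<in> Hc n obj D w (Suc k)"
    using Hcomb_degen[OF \<sigma>[unfolded Hc_def] assms(4)] unfolding Hc_def .
  show ?thesis
    unfolding Htrans_eq_map_precomp[OF w vw \<sigma>] Htrans_eq_map_precomp[OF w vw degen] by (rule degen_map[symmetric])
qed

lemma Htrans_self:
  assumes v: "v \<in> faces n" and \<sigma>: "\<sigma> \<in> Hc n obj D v k"
  shows "Htrans n obj D v v \<sigma> = \<sigma>"
  unfolding Htrans_eq_map_precomp[OF v subface_refl \<sigma>]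
  using subface_vertices[OF v subface_refl] \<sigma>[unfolded Hc_def]
  by (intro map_precomp_Hcomb_id is_cube_id[OF cube]) auto

lemma Htrans_Htrans:
  assumes u: "u \<in> faces n" and w: "w \<in> faces n" and vw: "subface v w" and wu: "subface w u"
    and \<sigma>: "\<sigma> \<in> Hc n obj D u k"
  shows "Htrans n obj D w v (Htrans n obj D u w \<sigma>) = Htrans n obj D u v \<sigma>"
proof -
  let ?f = "precomp (D (init_v v) (init_v w)) (obj (init_v v))"
    and ?g = "precomp (D (init_v w) (init_v u)) (obj (init_v w))"
    and ?h = "precomp (D (init_v v) (init_v u)) (obj (init_v v))"
  have iu: "init_v u \<subseteq> {..<n}" using subface_vertices[OF u subface_refl] by blast
  have fg: "?f (?g \<phi>) = ?h \<phi>" for \<phi>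
  proof -
    have "?f (?g \<phi>) = precomp (D (init_v w) (init_v u) \<circ> D (init_v v) (init_v w)) (obj (init_v v)) \<phi>"
      using is_mor_bound[OF is_mor_init_v[OF w vw]] by (rule precomp_precomp)
    also have "\<dots> = ?h \<phi>"
      using is_cube_comp[OF cube subface_vertices(1)[OF w vw] subface_vertices(1)[OF u wu] iu]
      by (intro precomp_cong) simp
    finally show ?thesis .
  qed
  have "Htrans n obj D w v (Htrans n obj D u w \<sigma>) = map ?f (Htrans n obj D u w \<sigma>)"
    using Htrans_in_Hc[OF u wu \<sigma>] by (rule Htrans_eq_map_precomp[OF w vw])
  also have "\<dots> = map ?f (map ?g \<sigma>)" by (simp add: Htrans_eq_map_precomp[OF u wu \<sigma>])
  also have "\<dots> = map ?h \<sigma>" by (simp add: fg)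
  also have "\<dots> = Htrans n obj D u v \<sigma>"
    using \<sigma> by (rule Htrans_eq_map_precomp[OF u subface_trans[OF vw wu], symmetric])
  finally show ?thesis .
qed

end

theorem proposition4p7:
  fixes n :: nat
    and obj :: "nat set \<Rightarrow> nat"
    and D :: "nat set \<Rightarrow> nat set \<Rightarrow> nat \<Rightarrow> nat"
  assumes "is_cube n obj D"
  shows
    "(\<forall>v w. v \<in> faces n \<and> w \<in> faces n \<and> subface v w \<longrightarrow>
        (\<forall>k \<sigma>. \<sigma> \<in> Hc n obj D w k \<longrightarrow>
           Htrans n obj D w v \<sigma> \<in> Hc n obj D v k \<and>
           (\<forall>i\<le>k. 0 < k \<longrightarrow> Htrans n obj D w v (dface i \<sigma>) = dface i (Htrans n obj D w v \<sigma>)) \<and>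
           (\<forall>i\<le>k. Htrans n obj D w v (degen i \<sigma>) = degen i (Htrans n obj D w v \<sigma>))))
     \<and> (\<forall>v. v \<in> faces n \<longrightarrow> (\<forall>k \<sigma>. \<sigma> \<in> Hc n obj D v k \<longrightarrow> Htrans n obj D v v \<sigma> = \<sigma>))
     \<and> (\<forall>u w v. u \<in> faces n \<and> w \<in> faces n \<and> v \<in> faces n \<and> subface v w \<and> subface w u \<longrightarrow>
        (\<forall>k \<sigma>. \<sigma> \<in> Hc n obj D u k \<longrightarrow>
           Htrans n obj D w v (Htrans n obj D u w \<sigma>) = Htrans n obj D u v \<sigma>))"
proof (intro conjI allI impI; (elim conjE)?)
  show "Htrans n obj D w v \<sigma> \<in> Hc n obj D v k"
    if "v \<in> faces n" "w \<in> faces n" "subface v w" "\<sigma> \<in> Hc n obj D w k" for v w k \<sigma>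
    using that(2-) by (rule Htrans_in_Hc[OF assms])
  show "Htrans n obj D w v (dface i \<sigma>) = dface i (Htrans n obj D w v \<sigma>)"
    if "v \<in> faces n" "w \<in> faces n" "subface v w" "\<sigma> \<in> Hc n obj D w k" "i \<le> k" "0 < k"
    for v w k \<sigma> i
    using that(2-4,6,5) by (rule Htrans_dface[OF assms])
  show "Htrans n obj D w v (degen i \<sigma>) = degen i (Htrans n obj D w v \<sigma>)"
    if "v \<in> faces n" "w \<in> faces n" "subface v w" "\<sigma> \<in> Hc n obj D w k" "i \<le> k"
    for v w k \<sigma> i
    using that(2-) by (rule Htrans_degen[OF assms])
  show "Htrans n obj D v v \<sigma> = \<sigma>" if "v \<in> faces n" "\<sigma> \<in> Hc n obj D v k" for v k \<sigma>
    using that by (rule Htrans_self[OF assms])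
  show "Htrans n obj D w v (Htrans n obj D u w \<sigma>) = Htrans n obj D u v \<sigma>"
    if "u \<in> faces n" "w \<in> faces n" "v \<in> faces n" "subface v w" "subface w u" "\<sigma> \<in> Hc n obj D u k"
    for u w v k \<sigma>
    using that(1,2,4-) by (rule Htrans_Htrans[OF assms])
qed

end
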